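(* Let $B_R=(V,E)$ be the Bratteli diagram with $|V_n|=n+1$ vertices at each level $n\ge0$, in which each vertex of $V_n$ is joined to each vertex of $V_{n+1}$ by exactly one edge. Then the full group $G$ of $B_R$ is isomorphic to the group $R$ of rational permutations of the unit interval $[0,1)$.
   Context: For a Bratteli diagram with levels $V_0=\{v_0\},V_1,\dots$ and edge sets $E_n$ from $V_{n-1}$ to $V_n$, the path space $X$ is the set of infinite paths from $v_0$; $G_n$ is the group of homeomorphisms of $X$ that replace the first $n$ edges of each path by another path from $v_0$ to the same vertex of $V_n$ (depending only on those edges) and leave the rest unchanged; the full group is $G=\bigcup_nG_n$. For $n\in\mathbb N$ and a permutation $s$ of $\{0,1,\dots,n-1\}$, let $g_s:[0,1)\to[0,1)$ be $g_s(x)=\bigl(s(\lfloor nx\rfloor)+\{nx\}\bigr)/n$, where $\{a\}$ is the fractional part of $a$. The group $R$ is the set of all bijections $g_s$, over all $n\in\mathbb N$ and all permutations $s$ of $\{0,\dots,n-1\}$, under composition. *)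

theory Defs
  imports "HOL-Analysis.Analysis" "HOL-Algebra.Algebra"
begin

text \<open>The Bratteli diagram B_R: level n has vertices {0..n}; between every vertex of
  level n-1 and every vertex of level n there is exactly one edge.  Hence an infinite
  path from v0 is determined by its sequence of vertices x 0, x 1, x 2, ... with x n in {0..n}
  (x 0 = 0 is the root v0), and its n-th edge is the pair (x (n-1), x n).\<close>

definition BR_paths :: "(nat \<Rightarrow> nat) set" where
  "BR_paths = {x. \<forall>n. x n \<le> n}"

text \<open>Path space topology: subspace of the product of discrete spaces (the standard
  topology on nat => nat is the product topology, nat being discrete).\<close>

definition BR_Gn :: "nat \<Rightarrow> ((nat \<Rightarrow> nat) \<Rightarrow> (nat \<Rightarrow> nat)) set" where
  "BR_Gn n = {g. (\<forall>x. x \<notin> BR_paths \<longrightarrow> g x = x)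
      \<and> homeomorphic_map (top_of_set BR_paths) (top_of_set BR_paths) g
      \<and> (\<forall>x\<in>BR_paths. \<forall>k\<ge>n. g x k = x k)
      \<and> (\<forall>x\<in>BR_paths. \<forall>y\<in>BR_paths. (\<forall>k\<le>n. x k = y k) \<longrightarrow> (\<forall>k\<le>n. g x k = g y k))}"

definition BR_full_group :: "((nat \<Rightarrow> nat) \<Rightarrow> (nat \<Rightarrow> nat)) monoid" where
  "BR_full_group = \<lparr>carrier = (\<Union>n. BR_Gn n), monoid.mult = (\<lambda>f g. f \<circ> g), one = id\<rparr>"

definition rat_perm :: "nat \<Rightarrow> (nat \<Rightarrow> nat) \<Rightarrow> real \<Rightarrow> real" where
  "rat_perm n s x = (if 0 \<le> x \<and> x < 1
      then (real (s (nat \<lfloor>real n * x\<rfloor>)) + frac (real n * x)) / real n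
      else x)"

definition rat_perm_group :: "(real \<Rightarrow> real) monoid" where
  "rat_perm_group = \<lparr>carrier = {rat_perm n s | n s. n \<ge> 1 \<and> s permutes {..<n}},
      monoid.mult = (\<lambda>f g. f \<circ> g), one = id\<rparr>"

end

theory Submission
  imports Defs
begin

text \<open>Writing t \<in> [0,1) in the factorial number system, its k-th digit
  \<lfloor>(k+1)! t\<rfloor> mod (k+1) lies in {0..k}, i.e. is a vertex of V_k, so t determines a path of B_R;
  the cylinder of paths with a given prefix of length n corresponds to one of the (n+1)! intervals
  [A/(n+1)!, (A+1)/(n+1)!).  An element of G_n permutes these prefixes, preserving their end vertex
  (the residue of A mod n+1), and so acts on [0,1) as the rational permutation g_s with s a permutation
  of {0..(n+1)!-1}.  Conversely, every g_s with s on N points equals its refinement to (N+1)! = N c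
  equal pieces, and since N+1 divides c this refinement fixes residues mod N+1, hence comes from G_N.
  The resulting correspondence is an injective homomorphism onto R, which also shows that G is a group.\<close>

lemma nat_floor_divide:
  fixes r :: real
  assumes "0 \<le> r" "c > 0"
  shows "nat \<lfloor>r / real c\<rfloor> = nat \<lfloor>r\<rfloor> div c"
    and "frac (r / real c) = (real (nat \<lfloor>r\<rfloor> mod c) + frac r) / real c"
proof -
  define B where "B = nat \<lfloor>r\<rfloor>"
  define y where "y = (real (B mod c) + frac r) / real c"
  have "B mod c < c" using assms(2) by simp
  then have "real (B mod c) + frac r < real c" using frac_lt_1[of r] by linarith
  then have y: "0 \<le> y" "y < 1" using assms(2) by (simp_all add: y_def)
  have "r = real B + frac r" using assms(1) by (simp add: B_def frac_def)
  also have "real B = real c * real (B div c) + real (B mod c)"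
    by (metis of_nat_add of_nat_mult div_mult_mod_eq mult.commute)
  finally have r: "r / real c = real (B div c) + y" using assms(2) by (simp add: y_def field_simps)
  then have "\<lfloor>r / real c\<rfloor> = int (B div c)" using y by (simp add: floor_unique)
  then show "nat \<lfloor>r / real c\<rfloor> = nat \<lfloor>r\<rfloor> div c" by (simp add: B_def)
  show "frac (r / real c) = (real (nat \<lfloor>r\<rfloor> mod c) + frac r) / real c"
    using r \<open>\<lfloor>r / real c\<rfloor> = int (B div c)\<close> by (simp add: frac_def y_def B_def)
qed

lemma nat_floor_mult_mod_frac:
  fixes Z :: real
  assumes "0 \<le> Z"
  shows "nat \<lfloor>real (m * d) * Z\<rfloor> mod m = nat \<lfloor>real (m * d) * frac Z\<rfloor> mod m"
proof -
  have "real (m * d) * Z = of_int (int (m * d) * \<lfloor>Z\<rfloor>) + real (m * d) * frac Z"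
    by (simp add: frac_def algebra_simps)
  then have "\<lfloor>real (m * d) * Z\<rfloor> = int (m * d) * \<lfloor>Z\<rfloor> + \<lfloor>real (m * d) * frac Z\<rfloor>"
    by (simp only: int_add_floor)
  then have "nat \<lfloor>real (m * d) * Z\<rfloor> = m * (d * nat \<lfloor>Z\<rfloor>) + nat \<lfloor>real (m * d) * frac Z\<rfloor>"
    using assms by (simp add: nat_add_distrib nat_mult_distrib)
  then show ?thesis by simp
qed

lemma mult_add_eq_iff:
  fixes a a' b b' m :: nat
  assumes "b < m" "b' < m"
  shows "a * m + b = a' * m + b' \<longleftrightarrow> a = a' \<and> b = b'"
proof
  assume e: "a * m + b = a' * m + b'"
  show "a = a' \<and> b = b'"
    using arg_cong[OF e, of "\<lambda>k. k div m"] arg_cong[OF e, of "\<lambda>k. k mod m"] assms by simp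
qed simp

section \<open>Rational permutations\<close>

lemma rat_perm_outside: "\<not> (0 \<le> x \<and> x < 1) \<Longrightarrow> rat_perm n s x = x"
  unfolding rat_perm_def by (rule if_not_P)

lemma rat_perm_unit:
  assumes s: "s permutes {..<n}" and n: "n \<ge> 1" and x: "0 \<le> x" "x < 1"
  shows "0 \<le> rat_perm n s x" "rat_perm n s x < 1"
    and "nat \<lfloor>real n * rat_perm n s x\<rfloor> = s (nat \<lfloor>real n * x\<rfloor>)"
    and "frac (real n * rat_perm n s x) = frac (real n * x)"
proof -
  define a where "a = nat \<lfloor>real n * x\<rfloor>"
  have "real n * x < real n" using x n by simp
  then have "a < n" using x by (simp add: a_def floor_less_iff nat_less_iff)
  then have "s a < n" using s by (meson lessThan_iff permutes_in_image)
  moreover have "0 \<le> frac (real n * x)" "frac (real n * x) < 1" by (simp_all add: frac_lt_1)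
  moreover have eq: "real n * rat_perm n s x = real (s a) + frac (real n * x)"
    using x n by (simp add: rat_perm_def a_def)
  ultimately have "\<lfloor>real n * rat_perm n s x\<rfloor> = int (s a)"
    and lt: "real n * rat_perm n s x < real n"
    by (simp_all add: floor_unique)
  then show "nat \<lfloor>real n * rat_perm n s x\<rfloor> = s (nat \<lfloor>real n * x\<rfloor>)"
    and "frac (real n * rat_perm n s x) = frac (real n * x)"
    using eq by (simp_all add: a_def frac_def)
  show "rat_perm n s x < 1" using lt n by (simp add: mult_less_cancel_left1)
  have "0 \<le> real n * rat_perm n s x" using eq by simp
  then show "0 \<le> rat_perm n s x" using n by (simp add: zero_le_mult_iff)
qed

lemma rat_perm_comp:
  assumes s: "s permutes {..<n}" and t: "t permutes {..<n}" and n: "n \<ge> 1"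
  shows "rat_perm n s \<circ> rat_perm n t = rat_perm n (s \<circ> t)"
proof
  fix x
  show "(rat_perm n s \<circ> rat_perm n t) x = rat_perm n (s \<circ> t) x"
  proof (cases "0 \<le> x \<and> x < 1")
    case True
    then have "0 \<le> rat_perm n t x \<and> rat_perm n t x < 1" using rat_perm_unit[OF t n] by simp
    then have "rat_perm n s (rat_perm n t x) = (real (s (nat \<lfloor>real n * rat_perm n t x\<rfloor>))
        + frac (real n * rat_perm n t x)) / real n"
      unfolding rat_perm_def[of n s] by (rule if_P)
    also have "\<dots> = (real ((s \<circ> t) (nat \<lfloor>real n * x\<rfloor>)) + frac (real n * x)) / real n"
      using True rat_perm_unit(3,4)[OF t n] by simp
    also have "\<dots> = rat_perm n (s \<circ> t) x" using True by (simp add: rat_perm_def)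
    finally show ?thesis by simp
  qed (simp add: rat_perm_outside)
qed

lemma rat_perm_id: "n \<ge> 1 \<Longrightarrow> rat_perm n id = id"
  by (rule ext) (simp add: rat_perm_def frac_def)

text \<open>g_s read on the finer partition of [0,1) into n c equal intervals.\<close>

definition refine :: "nat \<Rightarrow> nat \<Rightarrow> (nat \<Rightarrow> nat) \<Rightarrow> nat \<Rightarrow> nat" where
  "refine n c s B = (if B < n * c then s (B div c) * c + B mod c else B)"

lemma refine_permutes:
  assumes s: "s permutes {..<n}" and c: "c \<ge> 1"
  shows "refine n c s permutes {..<n * c}"
proof (rule inj_imp_permutes)
  show "refine n c s B \<in> {..<n * c}" if "B \<in> {..<n * c}" for B
  proof -
    have "B div c < n" using that c by (simp add: div_less_iff_less_mult)
    then have "s (B div c) < n" using s by (meson lessThan_iff permutes_in_image)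
    then have "(s (B div c) + 1) * c \<le> n * c" by (intro mult_right_mono) simp_all
    moreover have "B mod c < c" using c by simp
    ultimately show ?thesis using that by (simp add: refine_def algebra_simps)
  qed
  show "inj_on (refine n c s) {..<n * c}"
  proof (rule inj_onI)
    fix A B assume "A \<in> {..<n * c}" "B \<in> {..<n * c}" "refine n c s A = refine n c s B"
    then have "s (A div c) * c + A mod c = s (B div c) * c + B mod c" by (simp add: refine_def)
    then have "s (A div c) = s (B div c)" "A mod c = B mod c"
      using c by (simp_all add: mult_add_eq_iff)
    moreover from this(1) have "A div c = B div c" using s by (metis permutes_inj injD)
    ultimately show "A = B" by (metis div_mult_mod_eq)
  qed
qed (simp_all add: refine_def)

lemma rat_perm_refine:
  assumes s: "s permutes {..<n}" and n: "n \<ge> 1" and c: "c \<ge> 1"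
  shows "rat_perm n s = rat_perm (n * c) (refine n c s)"
proof
  fix x
  show "rat_perm n s x = rat_perm (n * c) (refine n c s) x"
  proof (cases "0 \<le> x \<and> x < 1")
    case True
    define r where "r = real (n * c) * x"
    define B where "B = nat \<lfloor>r\<rfloor>"
    have r0: "0 \<le> r" using True by (simp add: r_def)
    have "r < real (n * c)" using True n c by (simp add: r_def)
    then have "B < n * c" using r0 by (simp add: B_def floor_less_iff nat_less_iff)
    then have ref: "refine n c s B = s (B div c) * c + B mod c" by (simp add: refine_def)
    have "rat_perm (n * c) (refine n c s) x = (real (refine n c s B) + frac r) / real (n * c)"
      using True unfolding rat_perm_def B_def r_def by (rule if_P)
    then have rhs: "rat_perm (n * c) (refine n c s) x
        = (real (s (B div c) * c + B mod c) + frac r) / real (n * c)"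
      by (simp only: ref)
    have "real n * x = r / real c" using c by (simp add: r_def)
    then have "nat \<lfloor>real n * x\<rfloor> = B div c" "frac (real n * x) = (real (B mod c) + frac r) / real c"
      using nat_floor_divide[OF r0, of c] c by (simp_all add: B_def)
    then have "rat_perm n s x = (real (s (B div c)) + (real (B mod c) + frac r) / real c) / real n"
      using True unfolding rat_perm_def by simp
    also have "\<dots> = (real (s (B div c) * c + B mod c) + frac r) / real (n * c)"
      using c by (simp add: field_simps)
    finally show ?thesis using rhs by simp
  qed (simp add: rat_perm_outside)
qed

lemma refine_mod:
  assumes "m dvd c"
  shows "refine n c s B mod m = B mod m"
proof (cases "B < n * c")
  case True
  have "m dvd s (B div c) * c" using assms by simp
  then have "(s (B div c) * c + B mod c) mod m = B mod c mod m"
    by (metis dvd_imp_mod_0 mod_add_left_eq add_0)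
  then show ?thesis using True by (simp add: refine_def mod_mod_cancel[OF assms])
qed (simp add: refine_def)

lemma rat_perm_group_carrier:
  "f \<in> carrier rat_perm_group \<longleftrightarrow> (\<exists>n s. f = rat_perm n s \<and> n \<ge> 1 \<and> s permutes {..<n})"
  by (auto simp: rat_perm_group_def)

lemma rat_perm_in_carrier: "n \<ge> 1 \<Longrightarrow> s permutes {..<n} \<Longrightarrow> rat_perm n s \<in> carrier rat_perm_group"
  by (auto simp: rat_perm_group_carrier)

lemma rat_perm_group_comp_closed:
  assumes "f \<in> carrier rat_perm_group" "g \<in> carrier rat_perm_group"
  shows "f \<circ> g \<in> carrier rat_perm_group"
proof -
  obtain n s m t where f: "f = rat_perm n s" "n \<ge> 1" "s permutes {..<n}"
    and g: "g = rat_perm m t" "m \<ge> 1" "t permutes {..<m}"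
    using assms by (auto simp: rat_perm_group_carrier)
  have s': "refine n m s permutes {..<n * m}" using refine_permutes[OF f(3) g(2)] .
  have t': "refine m n t permutes {..<n * m}" using refine_permutes[OF g(3) f(2)] by (simp add: mult.commute)
  have "f \<circ> g = rat_perm (n * m) (refine n m s) \<circ> rat_perm (n * m) (refine m n t)"
    using f g rat_perm_refine[OF f(3) f(2) g(2)] rat_perm_refine[OF g(3) g(2) f(2)]
    by (simp add: mult.commute)
  also have "\<dots> = rat_perm (n * m) (refine n m s \<circ> refine m n t)"
    using s' t' f(2) g(2) by (simp add: rat_perm_comp)
  finally show ?thesis
    using f(2) g(2) s' t' by (simp add: rat_perm_in_carrier permutes_compose)
qed

lemma rat_perm_group_mult [simp]: "f \<otimes>\<^bsub>rat_perm_group\<^esub> g = f \<circ> g"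
  and rat_perm_group_one [simp]: "\<one>\<^bsub>rat_perm_group\<^esub> = id"
  by (simp_all add: rat_perm_group_def)

lemma id_in_rat_perm_group: "id \<in> carrier rat_perm_group"
  using rat_perm_in_carrier[OF order_refl permutes_id] by (simp add: rat_perm_id)

lemma group_rat_perm_group: "group rat_perm_group"
proof (rule groupI)
  show "\<one>\<^bsub>rat_perm_group\<^esub> \<in> carrier rat_perm_group" by (simp add: id_in_rat_perm_group)
  fix f assume "f \<in> carrier rat_perm_group"
  then obtain n s where f: "f = rat_perm n s" "n \<ge> 1" "s permutes {..<n}"
    by (auto simp: rat_perm_group_carrier)
  have "rat_perm n (inv_into UNIV s) \<circ> f = id"
    using f rat_perm_comp[OF permutes_inv[OF f(3)] f(3) f(2)]
    by (simp add: permutes_inv_o rat_perm_id)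
  then show "\<exists>g\<in>carrier rat_perm_group. g \<otimes>\<^bsub>rat_perm_group\<^esub> f = \<one>\<^bsub>rat_perm_group\<^esub>"
    using rat_perm_in_carrier[OF f(2) permutes_inv[OF f(3)]] by auto
qed (simp_all add: rat_perm_group_comp_closed o_assoc)

lemma rat_perm_group_unit:
  assumes "f \<in> carrier rat_perm_group"
  shows "0 \<le> x \<Longrightarrow> x < 1 \<Longrightarrow> 0 \<le> f x \<and> f x < 1"
    and "\<not> (0 \<le> x \<and> x < 1) \<Longrightarrow> f x = x"
  using assms rat_perm_unit(1,2) rat_perm_outside by (auto simp: rat_perm_group_carrier)

section \<open>Factorial expansion and paths of the diagram\<close>

text \<open>path_of t is the path whose vertex at level k is the k-th factorial digit of t; cell n t and
  prefix_index n x are the mixed-radix indices (radices 2, 3, ..., n+1) of the interval of length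
  1/(n+1)! containing t and of the first n edges of x.\<close>

definition path_of :: "real \<Rightarrow> nat \<Rightarrow> nat" where
  "path_of t k = nat \<lfloor>fact (Suc k) * t\<rfloor> mod Suc k"

definition cell :: "nat \<Rightarrow> real \<Rightarrow> nat" where
  "cell n t = nat \<lfloor>fact (Suc n) * t\<rfloor>"

fun prefix_index :: "nat \<Rightarrow> (nat \<Rightarrow> nat) \<Rightarrow> nat" where
  "prefix_index 0 x = 0"
| "prefix_index (Suc n) x = prefix_index n x * Suc (Suc n) + x (Suc n)"

definition grid_path :: "nat \<Rightarrow> nat \<Rightarrow> nat \<Rightarrow> nat" where
  "grid_path n A = path_of (real A / fact (Suc n))"

lemma BR_paths_less: "x \<in> BR_paths \<Longrightarrow> x k < Suc k"
  by (simp add: BR_paths_def less_Suc_eq_le)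

lemma BR_paths_0: "x \<in> BR_paths \<Longrightarrow> x 0 = 0"
  using BR_paths_less[of x 0] by simp

lemma path_of_cell: "path_of t k = cell k t mod Suc k"
  by (simp add: path_of_def cell_def)

lemma path_of_in_paths [simp]: "path_of t \<in> BR_paths"
  by (simp add: BR_paths_def path_of_def less_Suc_eq_le[symmetric])

lemma grid_path_in_paths [simp]: "grid_path n A \<in> BR_paths"
  by (simp add: grid_path_def)

lemma cell_Suc_div:
  assumes "0 \<le> t"
  shows "cell (Suc n) t div Suc (Suc n) = cell n t"
proof -
  have "fact (Suc (Suc n)) * t / real (Suc (Suc n)) = fact (Suc n) * t"
    by (simp only: fact_Suc[of "Suc n"]) simp
  then show ?thesis
    using nat_floor_divide(1)[of "fact (Suc (Suc n)) * t" "Suc (Suc n)"] assms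
    by (simp add: cell_def mult.assoc)
qed

lemma prefix_index_path_of: "0 \<le> t \<Longrightarrow> t < 1 \<Longrightarrow> prefix_index n (path_of t) = cell n t"
proof (induction n)
  case 0
  then show ?case by (simp add: cell_def floor_eq_iff)
next
  case (Suc n)
  have "cell (Suc n) t = cell (Suc n) t div Suc (Suc n) * Suc (Suc n) + cell (Suc n) t mod Suc (Suc n)"
    by (rule div_mult_mod_eq[symmetric])
  also have "\<dots> = prefix_index (Suc n) (path_of t)"
    by (simp only: prefix_index.simps cell_Suc_div[OF Suc.prems(1)] Suc.IH[OF Suc.prems, symmetric]
        path_of_cell[of t "Suc n"])
  finally show ?case by simp
qed

lemma prefix_index_less: "x \<in> BR_paths \<Longrightarrow> prefix_index n x < fact (Suc n)"
proof (induction n)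
  case (Suc n)
  have "x (Suc n) < Suc (Suc n)" using Suc.prems by (rule BR_paths_less)
  then have "prefix_index (Suc n) x < (prefix_index n x + 1) * Suc (Suc n)" by simp
  also have "\<dots> \<le> fact (Suc n) * Suc (Suc n)" using Suc by (intro mult_right_mono) auto
  finally show ?case by (simp add: algebra_simps)
qed simp

lemma prefix_index_mod:
  assumes "x \<in> BR_paths"
  shows "prefix_index n x mod Suc n = x n"
proof (cases n)
  case 0
  then show ?thesis using BR_paths_0[OF assms] by simp
next
  case (Suc m)
  have "x n < Suc n" using assms by (rule BR_paths_less)
  then show ?thesis using Suc by (simp only: prefix_index.simps mod_mult_self3 mod_less)
qed

lemma prefix_index_eq_iff:
  assumes "x \<in> BR_paths" "y \<in> BR_paths"
  shows "prefix_index n x = prefix_index n y \<longleftrightarrow> (\<forall>k\<le>n. x k = y k)"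
proof (induction n)
  case 0
  have "x 0 = 0" "y 0 = 0" using assms by (simp_all add: BR_paths_0)
  then show ?case by simp
next
  case (Suc n)
  have "x (Suc n) < Suc (Suc n)" "y (Suc n) < Suc (Suc n)"
    using assms by (simp_all add: BR_paths_less)
  then have "prefix_index (Suc n) x = prefix_index (Suc n) y
      \<longleftrightarrow> prefix_index n x = prefix_index n y \<and> x (Suc n) = y (Suc n)"
    by (simp only: prefix_index.simps mult_add_eq_iff)
  then show ?case using Suc by (auto simp: le_Suc_eq)
qed

lemma prefix_index_cong: "\<forall>k\<le>n. x k = y k \<Longrightarrow> prefix_index n x = prefix_index n y"
  by (induction n) auto

lemma paths_eqI:
  assumes "x \<in> BR_paths" "y \<in> BR_paths" "prefix_index n x = prefix_index n y"
    and "\<And>k. n < k \<Longrightarrow> x k = y k"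
  shows "x = y"
proof
  fix k
  show "x k = y k" using assms prefix_index_eq_iff[OF assms(1,2)] by (cases "k \<le> n") auto
qed

lemma grid_point:
  assumes "A < fact (Suc n)"
  shows "0 \<le> real A / fact (Suc n)" "real A / fact (Suc n) < 1" "cell n (real A / fact (Suc n)) = A"
proof -
  have "real A < fact (Suc n)" using assms by (metis of_nat_fact of_nat_less_iff)
  then show "0 \<le> real A / fact (Suc n)" "real A / fact (Suc n) < 1" by simp_all
  show "cell n (real A / fact (Suc n)) = A" by (simp add: cell_def)
qed

lemma prefix_index_grid_path: "A < fact (Suc n) \<Longrightarrow> prefix_index n (grid_path n A) = A"
  using grid_point[of A n] prefix_index_path_of by (simp add: grid_path_def)

lemma grid_path_prefix_index:
  assumes "x \<in> BR_paths" "k \<le> n"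
  shows "grid_path n (prefix_index n x) k = x k"
proof -
  have "prefix_index n (grid_path n (prefix_index n x)) = prefix_index n x"
    by (rule prefix_index_grid_path[OF prefix_index_less[OF assms(1)]])
  then show ?thesis using prefix_index_eq_iff[OF grid_path_in_paths assms(1)] assms(2) by blast
qed

lemma path_of_eq_beyond:
  assumes "0 \<le> s" "0 \<le> t" "frac (fact (Suc n) * s) = frac (fact (Suc n) * t)" "n < k"
  shows "path_of s k = path_of t k"
proof -
  obtain d :: nat where "fact k = fact (Suc n) * d"
    using assms(4) by (metis Suc_leI dvdE fact_dvd)
  then have "(fact (Suc k) :: nat) = Suc k * d * fact (Suc n)"
    by (simp only: fact_Suc[of k] of_nat_id ac_simps)
  then have d: "(fact (Suc k) :: real) = real (Suc k * d) * fact (Suc n)"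
    by (metis of_nat_fact of_nat_mult)
  have "path_of u k = nat \<lfloor>real (Suc k * d) * frac (fact (Suc n) * u)\<rfloor> mod Suc k" if "0 \<le> u" for u
  proof -
    have "fact (Suc k) * u = real (Suc k * d) * (fact (Suc n) * u)"
      by (simp only: d mult.assoc)
    then show ?thesis
      using nat_floor_mult_mod_frac[OF mult_nonneg_nonneg[OF fact_ge_zero that], of "Suc k" d]
      by (simp only: path_of_def)
  qed
  then show ?thesis using assms by simp
qed

lemma rat_perm_path_of:
  assumes \<pi>: "\<pi> permutes {..<fact (Suc n)}" and t: "0 \<le> t" "t < 1"
  defines "u \<equiv> rat_perm (fact (Suc n)) \<pi> t"
  shows "0 \<le> u" "u < 1"
    and "prefix_index n (path_of u) = \<pi> (prefix_index n (path_of t))"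
    and "n < k \<Longrightarrow> path_of u k = path_of t k"
proof -
  note u = rat_perm_unit[OF \<pi> fact_ge_1 t, folded u_def]
  show "0 \<le> u" "u < 1" using u by simp_all
  show "prefix_index n (path_of u) = \<pi> (prefix_index n (path_of t))"
    using u t by (simp add: prefix_index_path_of cell_def del: fact_Suc)
  show "n < k \<Longrightarrow> path_of u k = path_of t k"
    using u t by (intro path_of_eq_beyond) (simp_all del: fact_Suc)
qed

lemma path_of_inj: "inj_on path_of {0..<1}"
proof (rule inj_onI)
  fix s t :: real assume st: "s \<in> {0..<1}" "t \<in> {0..<1}" "path_of s = path_of t"
  have close: "\<bar>s - t\<bar> < inverse (real (Suc n))" for n
  proof -
    have "cell n s = cell n t" using st prefix_index_path_of[of _ n] by (metis atLeastLessThan_iff)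
    then have "\<lfloor>fact (Suc n) * s\<rfloor> = \<lfloor>fact (Suc n) * t\<rfloor>"
      using st unfolding cell_def by (subst (asm) eq_nat_nat_iff) (simp_all del: fact_Suc)
    then have "\<bar>fact (Suc n) * s - fact (Suc n) * t\<bar> < (1 :: real)"
      using floor_correct[of "fact (Suc n) * s"] floor_correct[of "fact (Suc n) * t"] by linarith
    then have "fact (Suc n) * \<bar>s - t\<bar> < 1"
      by (simp only: abs_mult right_diff_distrib[symmetric] abs_of_nonneg fact_ge_zero)
    moreover have "real (Suc n) \<le> fact (Suc n)" by (metis fact_ge_self of_nat_fact of_nat_le_iff)
    ultimately have "real (Suc n) * \<bar>s - t\<bar> < 1"
      by (meson abs_ge_zero le_less_trans mult_right_mono)
    then show ?thesis by (simp add: field_simps)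
  qed
  show "s = t"
  proof (rule ccontr)
    assume "s \<noteq> t"
    then obtain n where "inverse (real (Suc n)) < \<bar>s - t\<bar>"
      using reals_Archimedean[of "\<bar>s - t\<bar>"] by auto
    with close[of n] show False by simp
  qed
qed

section \<open>The groups G_n\<close>

lemma BR_GnD:
  assumes "g \<in> BR_Gn n"
  shows "x \<notin> BR_paths \<Longrightarrow> g x = x"
    and "g ` BR_paths = BR_paths"
    and "x \<in> BR_paths \<Longrightarrow> n \<le> k \<Longrightarrow> g x k = x k"
    and "x \<in> BR_paths \<Longrightarrow> y \<in> BR_paths \<Longrightarrow> \<forall>i\<le>n. x i = y i \<Longrightarrow> k \<le> n \<Longrightarrow> g x k = g y k"
    and "homeomorphic_map (top_of_set BR_paths) (top_of_set BR_paths) g"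
proof -
  show "x \<notin> BR_paths \<Longrightarrow> g x = x" "x \<in> BR_paths \<Longrightarrow> n \<le> k \<Longrightarrow> g x k = x k"
    and hom: "homeomorphic_map (top_of_set BR_paths) (top_of_set BR_paths) g"
    using assms unfolding BR_Gn_def by blast+
  show "x \<in> BR_paths \<Longrightarrow> y \<in> BR_paths \<Longrightarrow> \<forall>i\<le>n. x i = y i \<Longrightarrow> k \<le> n \<Longrightarrow> g x k = g y k"
    using assms unfolding BR_Gn_def by blast
  show "g ` BR_paths = BR_paths" using homeomorphic_imp_surjective_map[OF hom] by simp
qed

lemma BR_Gn_in_paths:
  assumes "g \<in> BR_Gn n" "x \<in> BR_paths"
  shows "g x \<in> BR_paths"
proof -
  have "g x \<in> g ` BR_paths" using assms(2) by (rule imageI)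
  then show ?thesis by (simp only: BR_GnD(2)[OF assms(1)])
qed

lemma BR_Gn_mono:
  assumes "n \<le> m"
  shows "BR_Gn n \<subseteq> BR_Gn m"
proof
  fix g assume g: "g \<in> BR_Gn n"
  note G = BR_GnD[OF g]
  show "g \<in> BR_Gn m"
    unfolding BR_Gn_def
  proof (intro CollectI conjI allI ballI impI)
    show "g x = x" if "x \<notin> BR_paths" for x using that by (rule G(1))
    show "homeomorphic_map (top_of_set BR_paths) (top_of_set BR_paths) g" by (rule G(5))
    show "g x k = x k" if "x \<in> BR_paths" "m \<le> k" for x k using that assms by (intro G(3)) simp_all
    fix x y k assume x: "x \<in> BR_paths" and y: "y \<in> BR_paths" and xy: "\<forall>k\<le>m. x k = y k" and "k \<le> m"
    show "g x k = g y k"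
    proof (cases "k \<le> n")
      case True
      then show ?thesis using xy assms by (intro G(4)[OF x y]) simp_all
    next
      case False
      then show ?thesis using G(3)[OF x] G(3)[OF y] xy \<open>k \<le> m\<close> by simp
    qed
  qed
qed

lemma BR_Gn_comp:
  assumes g: "g \<in> BR_Gn n" and h: "h \<in> BR_Gn n"
  shows "g \<circ> h \<in> BR_Gn n"
  unfolding BR_Gn_def
proof (intro CollectI conjI allI ballI impI)
  note G = BR_GnD[OF g] and H = BR_GnD[OF h]
  have hx: "h x \<in> BR_paths" if "x \<in> BR_paths" for x using h that by (rule BR_Gn_in_paths)
  show "(g \<circ> h) x = x" if "x \<notin> BR_paths" for x using G(1) H(1) that by simp
  show "homeomorphic_map (top_of_set BR_paths) (top_of_set BR_paths) (g \<circ> h)"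
    using H(5) G(5) by (rule homeomorphic_map_compose)
  show "(g \<circ> h) x k = x k" if "x \<in> BR_paths" "n \<le> k" for x k
    using G(3)[OF hx[OF that(1)] that(2)] H(3)[OF that] by simp
  fix x y k assume x: "x \<in> BR_paths" and y: "y \<in> BR_paths" and xy: "\<forall>k\<le>n. x k = y k" and "k \<le> n"
  have "\<forall>i\<le>n. h x i = h y i" using H(4)[OF x y xy] by blast
  then show "(g \<circ> h) x k = (g \<circ> h) y k" using G(4)[OF hx[OF x] hx[OF y]] \<open>k \<le> n\<close> by simp
qed

lemma BR_full_group_mult [simp]: "f \<otimes>\<^bsub>BR_full_group\<^esub> g = f \<circ> g"
  and BR_full_group_one [simp]: "\<one>\<^bsub>BR_full_group\<^esub> = id"
  and BR_full_group_carrier: "carrier BR_full_group = (\<Union>n. BR_Gn n)"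
  by (simp_all add: BR_full_group_def)

lemma BR_full_group_common_level:
  assumes "g \<in> carrier BR_full_group" "h \<in> carrier BR_full_group"
  obtains n where "g \<in> BR_Gn n" "h \<in> BR_Gn n"
proof -
  obtain a b where "g \<in> BR_Gn a" "h \<in> BR_Gn b" using assms by (auto simp: BR_full_group_carrier)
  then show thesis using BR_Gn_mono that by (meson max.cobounded1 max.cobounded2 subsetD)
qed

lemma BR_full_group_comp_closed:
  assumes "g \<in> carrier BR_full_group" "h \<in> carrier BR_full_group"
  shows "g \<circ> h \<in> carrier BR_full_group"
proof -
  obtain n where "g \<in> BR_Gn n" "h \<in> BR_Gn n" using assms by (rule BR_full_group_common_level)
  then show ?thesis using BR_Gn_comp by (auto simp: BR_full_group_carrier)
qed

lemma id_in_BR_full_group: "id \<in> carrier BR_full_group"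
  by (auto simp: BR_full_group_carrier BR_Gn_def)

definition prefix_action :: "nat \<Rightarrow> ((nat \<Rightarrow> nat) \<Rightarrow> nat \<Rightarrow> nat) \<Rightarrow> nat \<Rightarrow> nat" where
  "prefix_action n g A = (if A < fact (Suc n) then prefix_index n (g (grid_path n A)) else A)"

lemma prefix_index_BR_Gn:
  assumes g: "g \<in> BR_Gn n" and x: "x \<in> BR_paths"
  shows "prefix_index n (g x) = prefix_action n g (prefix_index n x)"
proof -
  have "\<forall>k\<le>n. g x k = g (grid_path n (prefix_index n x)) k"
    using BR_GnD(4)[OF g x grid_path_in_paths] grid_path_prefix_index[OF x] by simp
  then have "prefix_index n (g x) = prefix_index n (g (grid_path n (prefix_index n x)))"
    by (rule prefix_index_cong)
  then show ?thesis by (simp only: prefix_action_def if_P[OF prefix_index_less[OF x]])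
qed

lemma prefix_action_permutes:
  assumes g: "g \<in> BR_Gn n"
  shows "prefix_action n g permutes {..<fact (Suc n)}"
proof (rule inj_imp_permutes)
  have "{..<fact (Suc n)} \<subseteq> prefix_action n g ` {..<fact (Suc n)}"
  proof
    fix B :: nat assume B: "B \<in> {..<fact (Suc n)}"
    have "grid_path n B \<in> g ` BR_paths" by (simp add: BR_GnD(2)[OF g])
    then obtain x where x: "x \<in> BR_paths" "grid_path n B = g x" by (rule imageE)
    have "prefix_index n (g x) = B" using prefix_index_grid_path[of B n] B x(2) by simp
    then have "B = prefix_action n g (prefix_index n x)" using prefix_index_BR_Gn[OF g x(1)] by simp
    moreover have "prefix_index n x \<in> {..<fact (Suc n)}" using prefix_index_less[OF x(1)] by simp
    ultimately show "B \<in> prefix_action n g ` {..<fact (Suc n)}" by (rule image_eqI)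
  qed
  then show "inj_on (prefix_action n g) {..<fact (Suc n)}" by (rule finite_surj_inj[OF finite_lessThan])
  show "prefix_action n g A \<in> {..<fact (Suc n)}" if "A \<in> {..<fact (Suc n)}" for A
  proof -
    have "prefix_index n (g (grid_path n A)) < fact (Suc n)"
      using BR_Gn_in_paths[OF g grid_path_in_paths] by (rule prefix_index_less)
    then show ?thesis using that by (simp add: prefix_action_def)
  qed
qed (simp_all add: prefix_action_def)

lemma BR_Gn_eqI:
  assumes g: "g \<in> BR_Gn n" and g': "g' \<in> BR_Gn n"
    and grid: "\<And>A. A < fact (Suc n) \<Longrightarrow> g (grid_path n A) = g' (grid_path n A)"
  shows "g = g'"
proof
  fix x
  show "g x = g' x"
  proof (cases "x \<in> BR_paths")
    case True
    have "prefix_action n g = prefix_action n g'" by (rule ext) (simp add: prefix_action_def grid)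
    then have pre: "prefix_index n (g x) = prefix_index n (g' x)"
      using prefix_index_BR_Gn[OF g True] prefix_index_BR_Gn[OF g' True] by simp
    have gx: "g x \<in> BR_paths" "g' x \<in> BR_paths" using g g' True by (simp_all add: BR_Gn_in_paths)
    have tail: "g x k = g' x k" if "n < k" for k
      using BR_GnD(3)[OF g True] BR_GnD(3)[OF g' True] that by simp
    show ?thesis by (rule paths_eqI[OF gx pre tail])
  qed (simp add: BR_GnD(1)[OF g] BR_GnD(1)[OF g'])
qed

definition prefix_perm :: "nat \<Rightarrow> (nat \<Rightarrow> nat) \<Rightarrow> (nat \<Rightarrow> nat) \<Rightarrow> nat \<Rightarrow> nat" where
  "prefix_perm n \<sigma> x = (if x \<in> BR_paths
      then (\<lambda>k. if k \<le> n then grid_path n (\<sigma> (prefix_index n x)) k else x k) else x)"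

lemma continuous_on_prefix_index: "continuous_on UNIV (prefix_index n)"
proof (induction n)
  case 0
  have "prefix_index 0 = (\<lambda>x. 0)" by (rule ext) simp
  then show ?case by simp
next
  case (Suc n)
  have "prefix_index (Suc n) = (\<lambda>x. prefix_index n x * Suc (Suc n) + x (Suc n))" by (rule ext) simp
  then show ?case
    by (simp only:) (intro continuous_on_add continuous_on_mult' Suc continuous_on_const
        continuous_on_product_coordinates)
qed

lemma continuous_on_prefix_perm: "continuous_on BR_paths (prefix_perm n \<sigma>)"
proof -
  define F where "F x = (\<lambda>k. if k \<le> n then grid_path n (\<sigma> (prefix_index n x)) k else x k)"
    for x :: "nat \<Rightarrow> nat"
  have "continuous_on UNIV F"
    unfolding F_def
  proof (intro continuous_on_coordinatewise_then_product)
    fix k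
    have "continuous_on UNIV (\<lambda>x. (\<lambda>A. grid_path n (\<sigma> A) k) (prefix_index n x))"
      by (rule continuous_on_compose2[OF Topological_Spaces.continuous_on_discrete[of UNIV]
          continuous_on_prefix_index]) simp
    then show "continuous_on UNIV (\<lambda>x. if k \<le> n then grid_path n (\<sigma> (prefix_index n x)) k else x k)"
      by (cases "k \<le> n") simp_all
  qed
  then have "continuous_on BR_paths F" by (rule continuous_on_subset) simp
  then show ?thesis
    by (rule continuous_on_cong[THEN iffD1, rotated 2]) (simp_all add: prefix_perm_def F_def)
qed

lemma prefix_perm_in_paths: "x \<in> BR_paths \<Longrightarrow> prefix_perm n \<sigma> x \<in> BR_paths"
  using grid_path_in_paths[of n "\<sigma> (prefix_index n x)"] by (auto simp: BR_paths_def prefix_perm_def)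

lemma prefix_perm_beyond: "x \<in> BR_paths \<Longrightarrow> n < k \<Longrightarrow> prefix_perm n \<sigma> x k = x k"
  by (simp add: prefix_perm_def)

lemma prefix_index_prefix_perm:
  assumes \<sigma>: "\<sigma> permutes {..<fact (Suc n)}" and x: "x \<in> BR_paths"
  shows "prefix_index n (prefix_perm n \<sigma> x) = \<sigma> (prefix_index n x)"
proof -
  have "\<sigma> (prefix_index n x) < fact (Suc n)"
    using prefix_index_less[OF x] \<sigma> by (meson lessThan_iff permutes_in_image)
  moreover have "prefix_index n (prefix_perm n \<sigma> x) = prefix_index n (grid_path n (\<sigma> (prefix_index n x)))"
    by (rule prefix_index_cong) (simp add: prefix_perm_def x)
  ultimately show ?thesis by (simp add: prefix_index_grid_path)
qed

lemma prefix_perm_inv: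
  assumes \<sigma>: "\<sigma> permutes {..<fact (Suc n)}" and x: "x \<in> BR_paths"
  shows "prefix_perm n (inv_into UNIV \<sigma>) (prefix_perm n \<sigma> x) = x"
proof (rule paths_eqI[of _ _ n])
  show "prefix_index n (prefix_perm n (inv_into UNIV \<sigma>) (prefix_perm n \<sigma> x)) = prefix_index n x"
    using x \<sigma> permutes_inv[OF \<sigma>]
    by (simp add: prefix_index_prefix_perm prefix_perm_in_paths permutes_inverses)
qed (simp_all add: x prefix_perm_in_paths prefix_perm_beyond)

lemma prefix_perm_in_BR_Gn:
  assumes \<sigma>: "\<sigma> permutes {..<fact (Suc n)}"
    and end_vertex: "\<And>B. B < fact (Suc n) \<Longrightarrow> \<sigma> B mod Suc n = B mod Suc n"
  shows "prefix_perm n \<sigma> \<in> BR_Gn n"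
  unfolding BR_Gn_def
proof (intro CollectI conjI allI ballI impI)
  have \<tau>: "inv_into UNIV \<sigma> permutes {..<fact (Suc n)}" using \<sigma> by (rule permutes_inv)
  have "homeomorphic_maps (top_of_set BR_paths) (top_of_set BR_paths)
      (prefix_perm n \<sigma>) (prefix_perm n (inv_into UNIV \<sigma>))"
    using prefix_perm_inv[OF \<sigma>] prefix_perm_inv[OF \<tau>] permutes_inv_inv[OF \<sigma>]
    by (auto simp: homeomorphic_maps_def continuous_on_prefix_perm prefix_perm_in_paths)
  then show "homeomorphic_map (top_of_set BR_paths) (top_of_set BR_paths) (prefix_perm n \<sigma>)"
    by (rule homeomorphic_maps_imp_map)
  show "prefix_perm n \<sigma> x = x" if "x \<notin> BR_paths" for x using that by (simp add: prefix_perm_def)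
  show "prefix_perm n \<sigma> x k = x k" if x: "x \<in> BR_paths" and "n \<le> k" for x k
  proof (cases "k = n")
    case True
    have "prefix_perm n \<sigma> x n = \<sigma> (prefix_index n x) mod Suc n"
      using prefix_index_mod[OF prefix_perm_in_paths[OF x, of n \<sigma>], of n]
        prefix_index_prefix_perm[OF \<sigma> x]
      by simp
    also have "\<dots> = x n" using end_vertex[OF prefix_index_less[OF x]] prefix_index_mod[OF x] by simp
    finally show ?thesis using True by simp
  qed (use that in \<open>simp add: prefix_perm_beyond\<close>)
  fix x y k assume "x \<in> BR_paths" "y \<in> BR_paths" "\<forall>k\<le>n. x k = y k" "k \<le> n"
  moreover from this(3) have "prefix_index n x = prefix_index n y" by (rule prefix_index_cong)
  ultimately show "prefix_perm n \<sigma> x k = prefix_perm n \<sigma> y k" by (simp add: prefix_perm_def)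
qed

section \<open>The isomorphism\<close>

definition intertwines :: "((nat \<Rightarrow> nat) \<Rightarrow> nat \<Rightarrow> nat) \<Rightarrow> (real \<Rightarrow> real) \<Rightarrow> bool" where
  "intertwines g h \<longleftrightarrow> (\<forall>t. 0 \<le> t \<and> t < 1 \<longrightarrow> path_of (h t) = g (path_of t))"

lemma intertwines_unique:
  assumes "h \<in> carrier rat_perm_group" "h' \<in> carrier rat_perm_group"
    and "intertwines g h" "intertwines g h'"
  shows "h = h'"
proof
  fix t
  show "h t = h' t"
  proof (cases "0 \<le> t \<and> t < 1")
    case True
    then have "path_of (h t) = path_of (h' t)" using assms(3,4) by (simp add: intertwines_def)
    moreover have "h t \<in> {0..<1}" "h' t \<in> {0..<1}"
      using True rat_perm_group_unit(1)[OF assms(1)] rat_perm_group_unit(1)[OF assms(2)] by simp_all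
    ultimately show ?thesis by (rule inj_onD[OF path_of_inj])
  qed (simp add: rat_perm_group_unit(2)[OF assms(1)] rat_perm_group_unit(2)[OF assms(2)])
qed

lemma intertwines_rat_perm:
  assumes \<pi>: "\<pi> permutes {..<fact (Suc n)}"
    and paths: "\<And>x. x \<in> BR_paths \<Longrightarrow> g x \<in> BR_paths"
    and prefix: "\<And>x. x \<in> BR_paths \<Longrightarrow> prefix_index n (g x) = \<pi> (prefix_index n x)"
    and beyond: "\<And>x k. x \<in> BR_paths \<Longrightarrow> n < k \<Longrightarrow> g x k = x k"
  shows "intertwines g (rat_perm (fact (Suc n)) \<pi>)"
  unfolding intertwines_def
proof (intro allI impI)
  fix t :: real assume "0 \<le> t \<and> t < 1"
  then have t: "0 \<le> t" "t < 1" by simp_all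
  note u = rat_perm_path_of[OF \<pi> t]
  show "path_of (rat_perm (fact (Suc n)) \<pi> t) = g (path_of t)"
    by (rule paths_eqI[of _ _ n]) (simp_all add: u paths prefix beyond del: fact_Suc)
qed

lemma BR_Gn_intertwines:
  "g \<in> BR_Gn n \<Longrightarrow> intertwines g (rat_perm (fact (Suc n)) (prefix_action n g))"
  by (rule intertwines_rat_perm[OF prefix_action_permutes])
    (simp_all add: BR_Gn_in_paths prefix_index_BR_Gn BR_GnD(3))

lemma prefix_perm_intertwines:
  "\<sigma> permutes {..<fact (Suc n)} \<Longrightarrow> intertwines (prefix_perm n \<sigma>) (rat_perm (fact (Suc n)) \<sigma>)"
  by (rule intertwines_rat_perm)
    (simp_all add: prefix_perm_in_paths prefix_index_prefix_perm prefix_perm_beyond)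

lemma rat_perm_group_intertwined:
  assumes "h \<in> carrier rat_perm_group"
  obtains g where "g \<in> carrier BR_full_group" "intertwines g h"
proof -
  obtain N s where h: "h = rat_perm N s" "N \<ge> 1" "s permutes {..<N}"
    using assms by (auto simp: rat_perm_group_carrier)
  txt \<open>Refine to (N+1)! = N c pieces; as N+1 divides c, the end vertex at level N is preserved.\<close>
  define c where "c = Suc N * fact (N - 1)"
  have c: "c \<ge> 1" by (simp add: c_def Suc_le_eq)
  obtain k where k: "N = Suc k" using h(2) by (cases N) auto
  have "fact (Suc (Suc k)) = Suc (Suc k) * (Suc k * fact k)" by (simp only: fact_Suc of_nat_id)
  then have Nc: "N * c = fact (Suc N)" by (simp only: c_def k diff_Suc_1 mult.left_commute)
  define \<sigma> where "\<sigma> = refine N c s"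
  have \<sigma>: "\<sigma> permutes {..<fact (Suc N)}"
    using refine_permutes[OF h(3) c] by (simp add: \<sigma>_def Nc)
  have "\<sigma> B mod Suc N = B mod Suc N" for B
    unfolding \<sigma>_def by (rule refine_mod) (simp only: c_def dvd_triv_left)
  then have "prefix_perm N \<sigma> \<in> carrier BR_full_group"
    using prefix_perm_in_BR_Gn[OF \<sigma>] by (auto simp: BR_full_group_carrier)
  moreover have "h = rat_perm (fact (Suc N)) \<sigma>"
    using h rat_perm_refine[OF h(3) h(2) c] by (simp add: \<sigma>_def Nc)
  ultimately show thesis using prefix_perm_intertwines[OF \<sigma>] that by simp
qed

definition to_rat_perm :: "((nat \<Rightarrow> nat) \<Rightarrow> nat \<Rightarrow> nat) \<Rightarrow> real \<Rightarrow> real" where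
  "to_rat_perm g = (THE h. h \<in> carrier rat_perm_group \<and> intertwines g h)"

lemma to_rat_perm_eq:
  assumes "h \<in> carrier rat_perm_group" "intertwines g h"
  shows "to_rat_perm g = h"
  unfolding to_rat_perm_def using assms intertwines_unique by blast

lemma to_rat_perm:
  assumes "g \<in> carrier BR_full_group"
  shows "to_rat_perm g \<in> carrier rat_perm_group" "intertwines g (to_rat_perm g)"
proof -
  obtain n where g: "g \<in> BR_Gn n" using assms by (auto simp: BR_full_group_carrier)
  have "rat_perm (fact (Suc n)) (prefix_action n g) \<in> carrier rat_perm_group"
    by (rule rat_perm_in_carrier[OF fact_ge_1 prefix_action_permutes[OF g]])
  with BR_Gn_intertwines[OF g]
  show "to_rat_perm g \<in> carrier rat_perm_group" "intertwines g (to_rat_perm g)"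
    by (simp_all add: to_rat_perm_eq)
qed

lemma to_rat_perm_comp:
  assumes "g \<in> carrier BR_full_group" "g' \<in> carrier BR_full_group"
  shows "to_rat_perm (g \<circ> g') = to_rat_perm g \<circ> to_rat_perm g'"
proof (rule to_rat_perm_eq)
  show "to_rat_perm g \<circ> to_rat_perm g' \<in> carrier rat_perm_group"
    using assms by (simp add: to_rat_perm rat_perm_group_comp_closed)
  show "intertwines (g \<circ> g') (to_rat_perm g \<circ> to_rat_perm g')"
    using to_rat_perm[OF assms(1)] to_rat_perm[OF assms(2)]
      rat_perm_group_unit(1)[OF to_rat_perm(1)[OF assms(2)]]
    by (simp add: intertwines_def)
qed

lemma inj_on_to_rat_perm: "inj_on to_rat_perm (carrier BR_full_group)"
proof (rule inj_onI)
  fix g g' assume g: "g \<in> carrier BR_full_group" and g': "g' \<in> carrier BR_full_group"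
    and eq: "to_rat_perm g = to_rat_perm g'"
  obtain n where n: "g \<in> BR_Gn n" "g' \<in> BR_Gn n" using g g' by (rule BR_full_group_common_level)
  show "g = g'"
  proof (rule BR_Gn_eqI[OF n])
    fix A :: nat assume "A < fact (Suc n)"
    with grid_point[of A n] to_rat_perm(2)[OF g] to_rat_perm(2)[OF g'] eq
    show "g (grid_path n A) = g' (grid_path n A)"
      by (simp add: grid_path_def intertwines_def)
  qed
qed

lemma to_rat_perm_image: "to_rat_perm ` carrier BR_full_group = carrier rat_perm_group"
proof
  show "to_rat_perm ` carrier BR_full_group \<subseteq> carrier rat_perm_group" using to_rat_perm(1) by blast
  show "carrier rat_perm_group \<subseteq> to_rat_perm ` carrier BR_full_group"
  proof
    fix h assume h: "h \<in> carrier rat_perm_group"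
    then obtain g where "g \<in> carrier BR_full_group" "intertwines g h"
      by (rule rat_perm_group_intertwined)
    then show "h \<in> to_rat_perm ` carrier BR_full_group" using to_rat_perm_eq[OF h] by blast
  qed
qed

lemma to_rat_perm_id: "to_rat_perm id = id"
  by (rule to_rat_perm_eq[OF id_in_rat_perm_group]) (simp add: intertwines_def)

lemma group_BR_full_group: "group BR_full_group"
proof (rule groupI)
  fix g assume g: "g \<in> carrier BR_full_group"
  obtain r where r: "r \<in> carrier rat_perm_group" "r \<circ> to_rat_perm g = id"
    using group.l_inv_ex[OF group_rat_perm_group to_rat_perm(1)[OF g]] by auto
  from r(1) have "r \<in> to_rat_perm ` carrier BR_full_group" by (simp only: to_rat_perm_image)
  then obtain g' where g': "g' \<in> carrier BR_full_group" "r = to_rat_perm g'" by (rule imageE)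
  then have "to_rat_perm (g' \<circ> g) = to_rat_perm id"
    using g r(2) by (simp add: to_rat_perm_comp to_rat_perm_id)
  then have "g' \<circ> g = id"
    using g g'(1) by (intro inj_onD[OF inj_on_to_rat_perm])
      (simp_all add: BR_full_group_comp_closed id_in_BR_full_group)
  then show "\<exists>g'\<in>carrier BR_full_group. g' \<otimes>\<^bsub>BR_full_group\<^esub> g = \<one>\<^bsub>BR_full_group\<^esub>"
    using g' by auto
qed (simp_all add: BR_full_group_comp_closed id_in_BR_full_group o_assoc)

theorem mainTheorem19:
  shows "group BR_full_group \<and> group rat_perm_group \<and> BR_full_group \<cong> rat_perm_group"
proof -
  have "to_rat_perm \<in> iso BR_full_group rat_perm_group"
    by (intro isoI homI) (simp_all add: to_rat_perm to_rat_perm_comp bij_betw_def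
        inj_on_to_rat_perm to_rat_perm_image)
  then show ?thesis using group_BR_full_group group_rat_perm_group by (blast intro: is_isoI)
qed

end
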